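(* Let $d\ge 2$, $n,R\ge1$, and let ${\bf A}=\sum_{\nu=1}^R \xi_\nu\, {\bf u}^{(1)}_\nu\otimes\cdots\otimes{\bf u}^{(d)}_\nu\in\mathbb{R}^{n\times\cdots\times n}$ with $\xi_\nu\in\mathbb{R}$ and normalized skeleton vectors $\|{\bf u}^{(\ell)}_\nu\|=1$. For $\ell=1,\dots,d$ let $U^{(\ell)}=[{\bf u}^{(\ell)}_1,\dots,{\bf u}^{(\ell)}_R]\in\mathbb{R}^{n\times R}$ have singular values $\sigma_{\ell,1}\ge\sigma_{\ell,2}\ge\cdots\ge\sigma_{\ell,\min(n,R)}$, let $r_\ell\le\min(n,R)$, and let $W^{(\ell)}=Z^{(\ell)}_0D_{\ell,0}{V^{(\ell)}_0}^T$ be the rank-$r_\ell$ truncated SVD of $U^{(\ell)}$. Let ${\bf A}^0_{({\bf r})}=\boldsymbol{\xi}\times_1W^{(1)}\times_2\cdots\times_dW^{(d)}$ be the RHOSVD approximation, where $\boldsymbol{\xi}$ is the diagonal tensor with diagonal entries $\xi_1,\dots,\xi_R$. Norms are Frobenius (Euclidean) norms. (A) If one of the matrices $U^{(\ell)}$, say $U^{(1)}$, is orthogonal (its columns are mutually orthogonal), then $$\|{\bf A}-{\bf A}^0_{({\bf r})}\|\le C\,\|{\bf A}\|\sum_{\ell=1}^d\Big(\sum_{k=r_\ell+1}^{\min(n,R)}\sigma_{\ell,k}^2\Big)^{1/2}$$ with $C=1$. (B) If the decomposition is monotone, i.e., all coefficients $\xi_\nu$ and all entries of all skeleton vectors ${\bf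 u}^{(\ell)}_\nu$ are non-negative, then the same inequality holds with a constant $C$ that does not depend on ${\bf A}$.
   Context: For a tensor ${\bf T}$ and matrix $M$, ${\bf T}\times_\ell M$ denotes the $\ell$-mode product (multiplying every mode-$\ell$ fiber of ${\bf T}$ by $M$). The rank-$r_\ell$ truncated SVD of $U^{(\ell)}$ is $Z^{(\ell)}_0D_{\ell,0}{V^{(\ell)}_0}^T$, with $Z^{(\ell)}_0\in\mathbb{R}^{n\times r_\ell}$, $V^{(\ell)}_0\in\mathbb{R}^{R\times r_\ell}$ the leading left and right singular vectors and $D_{\ell,0}=\mathrm{diag}(\sigma_{\ell,1},\dots,\sigma_{\ell,r_\ell})$. *)

theory Defs
  imports Complex_Main "HOL-Library.FuncSet"
begin

text \<open>Conventions (0-based indices): a mode index l < d, a rank index nu < R,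
  a spatial index i < n. The skeleton vectors are u l nu :: nat => real
  (entries i < n).\<close>

definition multi_idx :: "nat \<Rightarrow> nat \<Rightarrow> (nat \<Rightarrow> nat) set" where
  "multi_idx d n = PiE {..<d} (\<lambda>_. {..<n})"

definition tnorm :: "nat \<Rightarrow> nat \<Rightarrow> ((nat \<Rightarrow> nat) \<Rightarrow> real) \<Rightarrow> real" where
  "tnorm d n T = sqrt (\<Sum>idx\<in>multi_idx d n. (T idx)^2)"

definition cp_tensor :: "nat \<Rightarrow> nat \<Rightarrow> (nat \<Rightarrow> real) \<Rightarrow> (nat \<Rightarrow> nat \<Rightarrow> nat \<Rightarrow> real)
    \<Rightarrow> (nat \<Rightarrow> nat) \<Rightarrow> real" where
  "cp_tensor d R xi u idx = (\<Sum>nu<R. xi nu * (\<Prod>l<d. u l nu (idx l)))"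

definition skel_mat :: "(nat \<Rightarrow> nat \<Rightarrow> nat \<Rightarrow> real) \<Rightarrow> nat \<Rightarrow> nat \<Rightarrow> nat \<Rightarrow> real" where
  "skel_mat u l i nu = u l nu i"

definition unit_skeleton :: "nat \<Rightarrow> nat \<Rightarrow> nat \<Rightarrow> (nat \<Rightarrow> nat \<Rightarrow> nat \<Rightarrow> real) \<Rightarrow> bool" where
  "unit_skeleton d n R u \<longleftrightarrow> (\<forall>l<d. \<forall>nu<R. sqrt (\<Sum>i<n. (u l nu i)^2) = 1)"

text \<open>Thin SVD of an n x R matrix U: U = Z diag(s) V^T with Z (n x m) and V (R x m)
  having orthonormal columns, m = min n R, and s nonnegative nonincreasing
  (the singular values sigma_1 >= ... >= sigma_m, here s 0 >= ... >= s (m-1)).\<close>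
definition is_thin_svd :: "nat \<Rightarrow> nat \<Rightarrow> (nat \<Rightarrow> nat \<Rightarrow> real) \<Rightarrow> (nat \<Rightarrow> nat \<Rightarrow> real)
    \<Rightarrow> (nat \<Rightarrow> real) \<Rightarrow> (nat \<Rightarrow> nat \<Rightarrow> real) \<Rightarrow> bool" where
  "is_thin_svd n R U Z s V \<longleftrightarrow>
     (\<forall>k<min n R. \<forall>k'<min n R. (\<Sum>i<n. Z i k * Z i k') = (if k = k' then 1 else 0)) \<and>
     (\<forall>k<min n R. \<forall>k'<min n R. (\<Sum>j<R. V j k * V j k') = (if k = k' then 1 else 0)) \<and>
     (\<forall>k<min n R. 0 \<le> s k) \<and>
     (\<forall>k. Suc k < min n R \<longrightarrow> s (Suc k) \<le> s k) \<and>
     (\<forall>i<n. \<forall>j<R. U i j = (\<Sum>k<min n R. Z i k * s k * V j k))"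

definition trunc_svd :: "nat \<Rightarrow> (nat \<Rightarrow> nat \<Rightarrow> real) \<Rightarrow> (nat \<Rightarrow> real) \<Rightarrow> (nat \<Rightarrow> nat \<Rightarrow> real)
    \<Rightarrow> nat \<Rightarrow> nat \<Rightarrow> real" where
  "trunc_svd r Z s V i j = (\<Sum>k<r. Z i k * s k * V j k)"

text \<open>RHOSVD approximation xi x_1 W^(1) x_2 ... x_d W^(d), xi the diagonal core tensor:
  entry at idx = sum_nu xi_nu prod_l W^(l)(idx l, nu).\<close>
definition rhosvd :: "nat \<Rightarrow> nat \<Rightarrow> (nat \<Rightarrow> real) \<Rightarrow> (nat \<Rightarrow> nat \<Rightarrow> nat \<Rightarrow> real)
    \<Rightarrow> (nat \<Rightarrow> nat) \<Rightarrow> real" where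
  "rhosvd d R xi W idx = (\<Sum>nu<R. xi nu * (\<Prod>l<d. W l (idx l) nu))"

definition svd_tail :: "nat \<Rightarrow> nat \<Rightarrow> nat \<Rightarrow> (nat \<Rightarrow> nat) \<Rightarrow> (nat \<Rightarrow> nat \<Rightarrow> real) \<Rightarrow> real" where
  "svd_tail d n R r s = (\<Sum>l<d. sqrt (\<Sum>k\<in>{r l..<min n R}. (s l k)^2))"

end

theory Submission
  imports Defs "HOL-Analysis.L2_Norm"
begin

text \<open>Write \<open>u\<^sub>\<nu>\<^sup>l\<close> and \<open>w\<^sub>\<nu>\<^sup>l\<close> for the \<open>\<nu>\<close>-th columns of \<open>U\<^sup>l\<close> and \<open>W\<^sup>l\<close>, so that
  \<open>A - A\<^sup>0 = \<Sum>\<^sub>\<nu> \<xi>\<^sub>\<nu> (\<otimes>\<^sub>l u\<^sub>\<nu>\<^sup>l - \<otimes>\<^sub>l w\<^sub>\<nu>\<^sup>l)\<close>.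
  Truncating an SVD does not increase column norms, so all factors have norm at most 1,
  and telescoping the difference of two rank-one tensors gives
  \<open>\<parallel>A - A\<^sup>0\<parallel> \<le> \<Sum>\<^sub>\<nu> |\<xi>\<^sub>\<nu>| \<Sum>\<^sub>l \<parallel>u\<^sub>\<nu>\<^sup>l - w\<^sub>\<nu>\<^sup>l\<parallel>\<close>.
  Cauchy-Schwarz in \<open>\<nu>\<close> bounds this by \<open>\<parallel>\<xi>\<parallel> \<Sum>\<^sub>l \<parallel>U\<^sup>l - W\<^sup>l\<parallel>\<close>, and the squared
  Frobenius error of a truncated SVD is the sum of the discarded squared singular values.
  Finally \<open>\<parallel>A\<parallel>\<^sup>2 = \<Sum>\<^sub>\<nu>\<^sub>\<mu> \<xi>\<^sub>\<nu> \<xi>\<^sub>\<mu> \<Prod>\<^sub>l \<langle>u\<^sub>\<nu>\<^sup>l, u\<^sub>\<mu>\<^sup>l\<rangle>\<close> has diagonal part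
  \<open>\<parallel>\<xi>\<parallel>\<^sup>2\<close>; the off-diagonal terms vanish in case (A) and are non-negative in case (B),
  so \<open>\<parallel>\<xi>\<parallel> \<le> \<parallel>A\<parallel>\<close> and \<open>C = 1\<close> works in both cases.\<close>

lemma tnorm_eq_L2_set: "tnorm d n T = L2_set T (multi_idx d n)"
  by (simp add: tnorm_def L2_set_def)

lemma L2_set_cmult: "L2_set (\<lambda>x. c * f x) A = \<bar>c\<bar> * L2_set f A"
  unfolding L2_set_def
  by (simp add: power_mult_distrib real_sqrt_mult sum_nonneg flip: sum_distrib_left)

lemma L2_set_sum_le: "L2_set (\<lambda>x. \<Sum>i\<in>I. f i x) A \<le> (\<Sum>i\<in>I. L2_set (f i) A)"
proof (induction I rule: infinite_finite_induct)
  case (insert i I)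
  have "L2_set (\<lambda>x. f i x + (\<Sum>j\<in>I. f j x)) A \<le> L2_set (f i) A + L2_set (\<lambda>x. \<Sum>j\<in>I. f j x) A"
    by (rule L2_set_triangle_ineq)
  with insert show ?case by simp
qed (simp_all add: L2_set_def)

lemma real_sqrt_prod: "sqrt (\<Prod>x\<in>A. f x) = (\<Prod>x\<in>A. sqrt (f x))"
  by (induction A rule: infinite_finite_induct) (auto simp: real_sqrt_mult)

lemma L2_set_rank_one:
  "L2_set (\<lambda>idx. \<Prod>l<d. f l (idx l)) (multi_idx d n) = (\<Prod>l<d. L2_set (f l) {..<n})"
proof -
  have "(\<Sum>idx\<in>multi_idx d n. (\<Prod>l<d. f l (idx l))\<^sup>2) = (\<Sum>idx\<in>multi_idx d n. \<Prod>l<d. (f l (idx l))\<^sup>2)"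
    by (simp add: prod_power_distrib)
  also have "\<dots> = (\<Prod>l<d. \<Sum>i<n. (f l i)\<^sup>2)"
    unfolding multi_idx_def by (rule prod_sum_PiE[symmetric]) auto
  finally show ?thesis
    unfolding L2_set_def by (simp add: real_sqrt_prod)
qed

lemma prod_diff_telescope:
  fixes a b :: "nat \<Rightarrow> 'a::comm_ring_1"
  shows "(\<Prod>l<d. a l) - (\<Prod>l<d. b l)
    = (\<Sum>k<d. \<Prod>l<d. if l < k then b l else if l = k then a l - b l else a l)"
proof (induction d)
  case (Suc d)
  let ?t = "\<lambda>k l. if l < k then b l else if l = k then a l - b l else a l"
  have "(\<Prod>l<Suc d. ?t k l) = (\<Prod>l<d. ?t k l) * a d" if "k < d" for k
    using that by simp
  moreover have "(\<Prod>l<d. ?t d l) = (\<Prod>l<d. b l)"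
    by (rule prod.cong) auto
  ultimately have "(\<Sum>k<Suc d. \<Prod>l<Suc d. ?t k l)
      = (\<Sum>k<d. \<Prod>l<d. ?t k l) * a d + (\<Prod>l<d. b l) * (a d - b d)"
    by (simp add: sum_distrib_right)
  also have "\<dots> = ((\<Prod>l<d. a l) - (\<Prod>l<d. b l)) * a d + (\<Prod>l<d. b l) * (a d - b d)"
    by (simp only: Suc)
  also have "\<dots> = (\<Prod>l<Suc d. a l) - (\<Prod>l<Suc d. b l)"
    by (simp add: algebra_simps)
  finally show ?case by simp
qed simp

lemma prod_le_factor:
  fixes x :: "'b \<Rightarrow> 'a::linordered_semidom"
  assumes "finite A" "k \<in> A" "\<And>l. l \<in> A \<Longrightarrow> 0 \<le> x l" "\<And>l. l \<in> A \<Longrightarrow> l \<noteq> k \<Longrightarrow> x l \<le> 1"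
  shows "(\<Prod>l\<in>A. x l) \<le> x k"
proof -
  have "(\<Prod>l\<in>A. x l) = x k * (\<Prod>l\<in>A - {k}. x l)"
    using assms(1,2) by (simp add: prod.remove)
  also have "\<dots> \<le> x k * 1"
    using assms by (intro mult_left_mono prod_le_1) auto
  finally show ?thesis by simp
qed

lemma L2_set_rank_one_diff_le:
  assumes a: "\<And>l. l < d \<Longrightarrow> L2_set (a l) {..<n} \<le> 1"
    and b: "\<And>l. l < d \<Longrightarrow> L2_set (b l) {..<n} \<le> 1"
  shows "L2_set (\<lambda>idx. (\<Prod>l<d. a l (idx l)) - (\<Prod>l<d. b l (idx l))) (multi_idx d n)
    \<le> (\<Sum>k<d. L2_set (\<lambda>i. a k i - b k i) {..<n})"
proof -
  define f where "f k l = (if l < k then b l else if l = k then (\<lambda>i. a l i - b l i) else a l)" for k l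
  have f_apply: "f k l (idx l)
      = (if l < k then b l (idx l) else if l = k then a l (idx l) - b l (idx l) else a l (idx l))"
    for k l idx
    by (simp add: f_def)
  have "L2_set (\<lambda>idx. (\<Prod>l<d. a l (idx l)) - (\<Prod>l<d. b l (idx l))) (multi_idx d n)
      = L2_set (\<lambda>idx. \<Sum>k<d. \<Prod>l<d. f k l (idx l)) (multi_idx d n)"
    by (simp only: prod_diff_telescope f_apply)
  also have "\<dots> \<le> (\<Sum>k<d. \<Prod>l<d. L2_set (f k l) {..<n})"
    by (rule order_trans[OF L2_set_sum_le]) (simp add: L2_set_rank_one)
  also have "\<dots> \<le> (\<Sum>k<d. L2_set (f k k) {..<n})"
    by (intro sum_mono prod_le_factor) (auto simp: f_def a b)
  finally show ?thesis
    by (simp add: f_def)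
qed

lemma tnorm_cp_tensor_diff_le:
  assumes "\<And>l nu. l < d \<Longrightarrow> nu < R \<Longrightarrow> L2_set (u l nu) {..<n} \<le> 1"
    and "\<And>l nu. l < d \<Longrightarrow> nu < R \<Longrightarrow> L2_set (w l nu) {..<n} \<le> 1"
  shows "tnorm d n (\<lambda>idx. cp_tensor d R xi u idx - cp_tensor d R xi w idx)
    \<le> (\<Sum>nu<R. \<bar>xi nu\<bar> * (\<Sum>l<d. L2_set (\<lambda>i. u l nu i - w l nu i) {..<n}))"
proof -
  have "tnorm d n (\<lambda>idx. cp_tensor d R xi u idx - cp_tensor d R xi w idx)
      = L2_set (\<lambda>idx. \<Sum>nu<R. xi nu * ((\<Prod>l<d. u l nu (idx l)) - (\<Prod>l<d. w l nu (idx l))))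
          (multi_idx d n)"
    by (simp add: tnorm_eq_L2_set cp_tensor_def right_diff_distrib sum_subtractf)
  also have "\<dots> \<le> (\<Sum>nu<R. \<bar>xi nu\<bar> *
      L2_set (\<lambda>idx. (\<Prod>l<d. u l nu (idx l)) - (\<Prod>l<d. w l nu (idx l))) (multi_idx d n))"
    by (rule order_trans[OF L2_set_sum_le]) (simp add: L2_set_cmult)
  also have "\<dots> \<le> (\<Sum>nu<R. \<bar>xi nu\<bar> * (\<Sum>l<d. L2_set (\<lambda>i. u l nu i - w l nu i) {..<n}))"
    using assms by (intro sum_mono mult_left_mono L2_set_rank_one_diff_le) auto
  finally show ?thesis .
qed

lemma rhosvd_eq_cp_tensor: "rhosvd d R xi W = cp_tensor d R xi (\<lambda>l nu i. W l i nu)"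
  by (simp add: fun_eq_iff rhosvd_def cp_tensor_def)

lemma orthonormal_sum_square:
  fixes Z :: "nat \<Rightarrow> nat \<Rightarrow> real"
  assumes orth: "\<forall>k<m. \<forall>k'<m. (\<Sum>i<n. Z i k * Z i k') = (if k = k' then 1 else 0)"
    and K: "K \<subseteq> {..<m}"
  shows "(\<Sum>i<n. (\<Sum>k\<in>K. c k * Z i k)\<^sup>2) = (\<Sum>k\<in>K. (c k)\<^sup>2)"
proof -
  have "finite K"
    using K finite_subset by blast
  have "(\<Sum>i<n. (\<Sum>k\<in>K. c k * Z i k)\<^sup>2)
      = (\<Sum>k\<in>K. \<Sum>k'\<in>K. c k * c k' * (\<Sum>i<n. Z i k * Z i k'))"
    by (simp add: power2_eq_square sum_product sum_distrib_left algebra_simps sum.swap[of _ "{..<n}"])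
  also have "\<dots> = (\<Sum>k\<in>K. \<Sum>k'\<in>K. c k * c k' * (if k = k' then 1 else 0))"
    using K orth by (intro sum.cong refl) (auto simp: subset_iff)
  also have "\<dots> = (\<Sum>k\<in>K. (c k)\<^sup>2)"
    using \<open>finite K\<close> by (simp add: power2_eq_square if_distrib cong: if_cong)
  finally show ?thesis .
qed

context
  fixes n R r :: nat and U Z V :: "nat \<Rightarrow> nat \<Rightarrow> real" and s :: "nat \<Rightarrow> real"
  assumes svd: "is_thin_svd n R U Z s V"
begin

private lemma left_orthonormal: "\<forall>k<min n R. \<forall>k'<min n R. (\<Sum>i<n. Z i k * Z i k') = (if k = k' then 1 else 0)"
  using svd by (simp add: is_thin_svd_def)

lemma trunc_svd_column_sum_square:
  assumes r: "r \<le> min n R"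
  shows "(\<Sum>i<n. (trunc_svd r Z s V i j)\<^sup>2) = (\<Sum>k<r. (s k * V j k)\<^sup>2)"
  unfolding trunc_svd_def
  by (subst orthonormal_sum_square[OF left_orthonormal, symmetric]) (use r in \<open>auto simp: algebra_simps\<close>)

lemma thin_svd_column_sum_square:
  assumes "j < R"
  shows "(\<Sum>i<n. (U i j)\<^sup>2) = (\<Sum>k<min n R. (s k * V j k)\<^sup>2)"
proof -
  have "(\<Sum>i<n. (U i j)\<^sup>2) = (\<Sum>i<n. (\<Sum>k<min n R. (s k * V j k) * Z i k)\<^sup>2)"
    using svd assms by (intro sum.cong refl) (simp add: is_thin_svd_def algebra_simps)
  also have "\<dots> = (\<Sum>k<min n R. (s k * V j k)\<^sup>2)"
    by (rule orthonormal_sum_square[OF left_orthonormal]) simp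
  finally show ?thesis .
qed

lemma trunc_svd_column_norm_le:
  assumes r: "r \<le> min n R" and "j < R"
  shows "L2_set (\<lambda>i. trunc_svd r Z s V i j) {..<n} \<le> L2_set (\<lambda>i. U i j) {..<n}"
  unfolding L2_set_def trunc_svd_column_sum_square[OF r] thin_svd_column_sum_square[OF \<open>j < R\<close>]
  using r by (intro real_sqrt_le_mono sum_mono2) auto

lemma trunc_svd_column_error:
  assumes r: "r \<le> min n R" and "j < R"
  shows "(\<Sum>i<n. (U i j - trunc_svd r Z s V i j)\<^sup>2) = (\<Sum>k\<in>{r..<min n R}. (s k * V j k)\<^sup>2)"
proof -
  have "U i j - trunc_svd r Z s V i j = (\<Sum>k\<in>{r..<min n R}. (s k * V j k) * Z i k)" if "i < n" for i
  proof -
    have "(\<Sum>k<min n R. (s k * V j k) * Z i k)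
        = (\<Sum>k<r. (s k * V j k) * Z i k) + (\<Sum>k\<in>{r..<min n R}. (s k * V j k) * Z i k)"
      using r by (simp add: lessThan_atLeast0 sum.atLeastLessThan_concat)
    then have "(\<Sum>k<min n R. (s k * V j k) * Z i k)
        = trunc_svd r Z s V i j + (\<Sum>k\<in>{r..<min n R}. (s k * V j k) * Z i k)"
      by (simp add: trunc_svd_def algebra_simps)
    with svd \<open>j < R\<close> that show ?thesis
      by (simp add: is_thin_svd_def algebra_simps)
  qed
  then have "(\<Sum>i<n. (U i j - trunc_svd r Z s V i j)\<^sup>2)
      = (\<Sum>i<n. (\<Sum>k\<in>{r..<min n R}. (s k * V j k) * Z i k)\<^sup>2)"
    by simp
  also have "\<dots> = (\<Sum>k\<in>{r..<min n R}. (s k * V j k)\<^sup>2)"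
    by (rule orthonormal_sum_square[OF left_orthonormal]) auto
  finally show ?thesis .
qed

lemma trunc_svd_error:
  assumes r: "r \<le> min n R"
  shows "(\<Sum>j<R. \<Sum>i<n. (U i j - trunc_svd r Z s V i j)\<^sup>2) = (\<Sum>k\<in>{r..<min n R}. (s k)\<^sup>2)"
proof -
  have V_norm: "(\<Sum>j<R. (V j k)\<^sup>2) = 1" if "k < min n R" for k
    using svd that by (simp add: is_thin_svd_def power2_eq_square)
  have "(\<Sum>j<R. \<Sum>i<n. (U i j - trunc_svd r Z s V i j)\<^sup>2)
      = (\<Sum>k\<in>{r..<min n R}. (s k)\<^sup>2 * (\<Sum>j<R. (V j k)\<^sup>2))"
    by (simp add: trunc_svd_column_error[OF r] power_mult_distrib sum_distrib_left sum.swap[of _ "{..<R}"])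
  also have "\<dots> = (\<Sum>k\<in>{r..<min n R}. (s k)\<^sup>2)"
    by (simp add: V_norm)
  finally show ?thesis .
qed

end

lemma tnorm_cp_tensor_square:
  "(tnorm d n (cp_tensor d R xi u))\<^sup>2
    = (\<Sum>nu<R. \<Sum>mu<R. xi nu * xi mu * (\<Prod>l<d. \<Sum>i<n. u l nu i * u l mu i))"
proof -
  have "(tnorm d n (cp_tensor d R xi u))\<^sup>2 = (\<Sum>idx\<in>multi_idx d n. (cp_tensor d R xi u idx)\<^sup>2)"
    by (simp add: tnorm_def sum_nonneg)
  also have "\<dots> = (\<Sum>idx\<in>multi_idx d n. \<Sum>nu<R. \<Sum>mu<R.
      xi nu * xi mu * (\<Prod>l<d. u l nu (idx l) * u l mu (idx l)))"
    by (simp add: cp_tensor_def power2_eq_square sum_product prod.distrib algebra_simps)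
  also have "\<dots> = (\<Sum>nu<R. \<Sum>mu<R.
      xi nu * xi mu * (\<Sum>idx\<in>multi_idx d n. \<Prod>l<d. u l nu (idx l) * u l mu (idx l)))"
    by (simp add: sum.swap[of _ "multi_idx d n"] sum_distrib_left)
  also have "\<dots> = (\<Sum>nu<R. \<Sum>mu<R. xi nu * xi mu * (\<Prod>l<d. \<Sum>i<n. u l nu i * u l mu i))"
    unfolding multi_idx_def by (subst prod_sum_PiE) auto
  finally show ?thesis .
qed

lemma L2_set_le_tnorm_cp_tensor:
  assumes unit: "unit_skeleton d n R u"
    and cross: "\<And>nu mu. nu < R \<Longrightarrow> mu < R \<Longrightarrow> nu \<noteq> mu \<Longrightarrow>
      0 \<le> xi nu * xi mu * (\<Prod>l<d. \<Sum>i<n. u l nu i * u l mu i)"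
  shows "L2_set xi {..<R} \<le> tnorm d n (cp_tensor d R xi u)"
proof -
  have diag: "(\<Prod>l<d. \<Sum>i<n. u l nu i * u l nu i) = 1" if "nu < R" for nu
    using unit that by (simp add: unit_skeleton_def flip: power2_eq_square)
  have "(\<Sum>nu<R. (xi nu)\<^sup>2)
      \<le> (\<Sum>nu<R. \<Sum>mu<R. xi nu * xi mu * (\<Prod>l<d. \<Sum>i<n. u l nu i * u l mu i))"
  proof (rule sum_mono)
    fix nu assume "nu \<in> {..<R}"
    then show "(xi nu)\<^sup>2 \<le> (\<Sum>mu<R. xi nu * xi mu * (\<Prod>l<d. \<Sum>i<n. u l nu i * u l mu i))"
      using member_le_sum[of nu "{..<R}" "\<lambda>mu. xi nu * xi mu * (\<Prod>l<d. \<Sum>i<n. u l nu i * u l mu i)"]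
      by (simp add: diag cross power2_eq_square)
  qed
  then have "(L2_set xi {..<R})\<^sup>2 \<le> (tnorm d n (cp_tensor d R xi u))\<^sup>2"
    by (simp add: L2_set_def sum_nonneg tnorm_cp_tensor_square)
  then show ?thesis
    by (rule power2_le_imp_le) (simp add: tnorm_eq_L2_set)
qed

lemma rhosvd_error_le:
  assumes unit: "unit_skeleton d n R u"
    and svd: "\<forall>l<d. is_thin_svd n R (skel_mat u l) (Z l) (s l) (V l)"
    and r: "\<forall>l<d. r l \<le> min n R"
  shows "tnorm d n (\<lambda>idx. cp_tensor d R xi u idx
           - rhosvd d R xi (\<lambda>l. trunc_svd (r l) (Z l) (s l) (V l)) idx)
    \<le> L2_set xi {..<R} * svd_tail d n R r s"
proof -
  define w where "w = (\<lambda>l nu i. trunc_svd (r l) (Z l) (s l) (V l) i nu)"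
  define e where "e l nu = L2_set (\<lambda>i. u l nu i - w l nu i) {..<n}" for l nu
  have u_norm: "L2_set (u l nu) {..<n} = 1" if "l < d" "nu < R" for l nu
    using unit that by (simp add: unit_skeleton_def L2_set_def)
  have w_norm: "L2_set (w l nu) {..<n} \<le> 1" if "l < d" "nu < R" for l nu
    using trunc_svd_column_norm_le[of n R "skel_mat u l" "Z l" "s l" "V l" "r l" nu] svd r u_norm that
    by (simp add: w_def skel_mat_def)
  have e_norm: "L2_set (e l) {..<R} = sqrt (\<Sum>k\<in>{r l..<min n R}. (s l k)\<^sup>2)" if "l < d" for l
    using trunc_svd_error[of n R "skel_mat u l" "Z l" "s l" "V l" "r l"] svd r that
    by (simp add: L2_set_def e_def w_def skel_mat_def sum_nonneg)
  have "tnorm d n (\<lambda>idx. cp_tensor d R xi u idx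
           - rhosvd d R xi (\<lambda>l. trunc_svd (r l) (Z l) (s l) (V l)) idx)
      = tnorm d n (\<lambda>idx. cp_tensor d R xi u idx - cp_tensor d R xi w idx)"
    by (simp add: rhosvd_eq_cp_tensor w_def)
  also have "\<dots> \<le> (\<Sum>nu<R. \<bar>xi nu\<bar> * (\<Sum>l<d. e l nu))"
    unfolding e_def using u_norm w_norm by (intro tnorm_cp_tensor_diff_le) auto
  also have "\<dots> = (\<Sum>l<d. \<Sum>nu<R. \<bar>xi nu\<bar> * \<bar>e l nu\<bar>)"
    by (simp add: e_def sum_distrib_left sum.swap[of _ "{..<d}"])
  also have "\<dots> \<le> (\<Sum>l<d. L2_set xi {..<R} * L2_set (e l) {..<R})"
    by (intro sum_mono L2_set_mult_ineq)
  also have "\<dots> = L2_set xi {..<R} * svd_tail d n R r s"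
    by (simp add: e_norm svd_tail_def sum_distrib_left)
  finally show ?thesis .
qed

lemma rhosvd_error_le_tnorm:
  assumes unit: "unit_skeleton d n R u"
    and svd: "\<forall>l<d. is_thin_svd n R (skel_mat u l) (Z l) (s l) (V l)"
    and r: "\<forall>l<d. r l \<le> min n R"
    and cross: "\<And>nu mu. nu < R \<Longrightarrow> mu < R \<Longrightarrow> nu \<noteq> mu \<Longrightarrow>
      0 \<le> xi nu * xi mu * (\<Prod>l<d. \<Sum>i<n. u l nu i * u l mu i)"
  shows "tnorm d n (\<lambda>idx. cp_tensor d R xi u idx
           - rhosvd d R xi (\<lambda>l. trunc_svd (r l) (Z l) (s l) (V l)) idx)
    \<le> tnorm d n (cp_tensor d R xi u) * svd_tail d n R r s"
proof -
  have "0 \<le> svd_tail d n R r s"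
    by (simp add: svd_tail_def sum_nonneg)
  with rhosvd_error_le[OF unit svd r] L2_set_le_tnorm_cp_tensor[OF unit cross]
  show ?thesis
    by (meson mult_right_mono order_trans)
qed

theorem corollary2p4:
  fixes d n R :: nat and r :: "nat \<Rightarrow> nat"
  assumes "d \<ge> 2" and "n \<ge> 1" and "R \<ge> 1"
    and "\<forall>l<d. r l \<le> min n R"
  shows
   "(\<forall>(xi :: nat \<Rightarrow> real) (u :: nat \<Rightarrow> nat \<Rightarrow> nat \<Rightarrow> real)
       (Z :: nat \<Rightarrow> nat \<Rightarrow> nat \<Rightarrow> real) (s :: nat \<Rightarrow> nat \<Rightarrow> real) (V :: nat \<Rightarrow> nat \<Rightarrow> nat \<Rightarrow> real).
       unit_skeleton d n R u \<and>
       (\<forall>l<d. is_thin_svd n R (skel_mat u l) (Z l) (s l) (V l)) \<and>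
       (\<exists>l0<d. \<forall>nu<R. \<forall>mu<R. nu \<noteq> mu \<longrightarrow> (\<Sum>i<n. u l0 nu i * u l0 mu i) = 0)
       \<longrightarrow> tnorm d n (\<lambda>idx. cp_tensor d R xi u idx
                 - rhosvd d R xi (\<lambda>l. trunc_svd (r l) (Z l) (s l) (V l)) idx)
           \<le> 1 * tnorm d n (cp_tensor d R xi u) * svd_tail d n R r s)
    \<and>
    (\<exists>C::real. \<forall>(xi :: nat \<Rightarrow> real) (u :: nat \<Rightarrow> nat \<Rightarrow> nat \<Rightarrow> real)
       (Z :: nat \<Rightarrow> nat \<Rightarrow> nat \<Rightarrow> real) (s :: nat \<Rightarrow> nat \<Rightarrow> real) (V :: nat \<Rightarrow> nat \<Rightarrow> nat \<Rightarrow> real).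
       unit_skeleton d n R u \<and>
       (\<forall>l<d. is_thin_svd n R (skel_mat u l) (Z l) (s l) (V l)) \<and>
       (\<forall>nu<R. 0 \<le> xi nu) \<and> (\<forall>l<d. \<forall>nu<R. \<forall>i<n. 0 \<le> u l nu i)
       \<longrightarrow> tnorm d n (\<lambda>idx. cp_tensor d R xi u idx
                 - rhosvd d R xi (\<lambda>l. trunc_svd (r l) (Z l) (s l) (V l)) idx)
           \<le> C * tnorm d n (cp_tensor d R xi u) * svd_tail d n R r s)"
proof (intro conjI exI[of _ 1] allI impI; elim conjE exE)
  fix xi u Z s V l0
  assume unit: "unit_skeleton d n R u"
    and svd: "\<forall>l<d. is_thin_svd n R (skel_mat u l) (Z l) (s l) (V l)"
    and orth: "l0 < d" "\<forall>nu<R. \<forall>mu<R. nu \<noteq> mu \<longrightarrow> (\<Sum>i<n. u l0 nu i * u l0 mu i) = 0"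
  have cross: "(\<Prod>l<d. \<Sum>i<n. u l nu i * u l mu i) = 0" if "nu < R" "mu < R" "nu \<noteq> mu" for nu mu
    using orth that by (intro prod_zero) auto
  show "tnorm d n (\<lambda>idx. cp_tensor d R xi u idx
                 - rhosvd d R xi (\<lambda>l. trunc_svd (r l) (Z l) (s l) (V l)) idx)
           \<le> 1 * tnorm d n (cp_tensor d R xi u) * svd_tail d n R r s"
    using unit svd assms(4) by (simp add: rhosvd_error_le_tnorm cross)
next
  fix xi :: "nat \<Rightarrow> real" and u Z s V
  assume unit: "unit_skeleton d n R u"
    and svd: "\<forall>l<d. is_thin_svd n R (skel_mat u l) (Z l) (s l) (V l)"
    and nonneg: "\<forall>nu<R. 0 \<le> xi nu" "\<forall>l<d. \<forall>nu<R. \<forall>i<n. 0 \<le> u l nu i"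
  have cross: "0 \<le> xi nu * xi mu * (\<Prod>l<d. \<Sum>i<n. u l nu i * u l mu i)" if "nu < R" "mu < R" for nu mu
    using nonneg that by (intro mult_nonneg_nonneg prod_nonneg sum_nonneg) auto
  show "tnorm d n (\<lambda>idx. cp_tensor d R xi u idx
                 - rhosvd d R xi (\<lambda>l. trunc_svd (r l) (Z l) (s l) (V l)) idx)
           \<le> 1 * tnorm d n (cp_tensor d R xi u) * svd_tail d n R r s"
    using unit svd assms(4) by (simp add: rhosvd_error_le_tnorm cross)
qed

end
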